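(* Let $k\ge 3$, let $i,i'$ be two distinct vertices and $c,c'\in[k]$. Let $H=H(i,i',c,c')$ be the partially pre-coloured graph built as follows: take two disjoint $k$-cliques with vertices $l_1,\dots,l_k$ and $r_1,\dots,r_k$; add the edge $\{i,l_1\}$; add a new vertex $w$, pre-coloured with colour $c$, adjacent to $l_2,\dots,l_{k-1}$; add the edge $\{i',r_1\}$; add a new vertex $w'$, pre-coloured with colour $c'$, adjacent to $r_2,\dots,r_{k-1}$; finally, if $c=c'$ add the edge $\{l_k,r_k\}$, and if $c\neq c'$ identify $l_k$ and $r_k$ into a single vertex. Then: (1) $H$ has $O(k)$ vertices; (2) $H$ has two pre-coloured vertices, each of degree $O(k)$; (3) for every pair $(b,b')\in[k]^2$ with $(b,b')\neq(c,c')$ there is a legal $k$-colouring $\chi$ of $H$ extending the pre-colouring with $\chi(i)=b$ and $\chi(i')=b'$, while no legal $k$-colouring of $H$ extending the pre-colouring has $\chi(i)=c$ and $\chi(i')=c'$.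
   Context: A legal $k$-colouring of a graph is a map from its vertices to $[k]$ assigning distinct colours to the endpoints of every edge; it extends a pre-colouring if it agrees with the prescribed colours on the pre-coloured vertices. *)

theory Defs
  imports Main
begin

definition legal_colouring :: "nat \<Rightarrow> 'v set \<Rightarrow> 'v set set \<Rightarrow> ('v \<Rightarrow> nat) \<Rightarrow> bool" where
  "legal_colouring k V E \<chi> \<longleftrightarrow>
     (\<forall>v\<in>V. \<chi> v \<in> {1..k}) \<and> (\<forall>x y. {x, y} \<in> E \<longrightarrow> x \<noteq> y \<longrightarrow> \<chi> x \<noteq> \<chi> y)"

definition extends_precol :: "('v \<rightharpoonup> nat) \<Rightarrow> ('v \<Rightarrow> nat) \<Rightarrow> bool" where
  "extends_precol pc \<chi> \<longleftrightarrow> (\<forall>v c. pc v = Some c \<longrightarrow> \<chi> v = c)"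

definition degree :: "'v set set \<Rightarrow> 'v \<Rightarrow> nat" where
  "degree E v = card {e\<in>E. v \<in> e}"

datatype hv = Vi | Vi' | Lv nat | Rv nat | Wv | Wv'

definition rv :: "nat \<Rightarrow> nat \<Rightarrow> nat \<Rightarrow> nat \<Rightarrow> hv" where
  "rv k c c' j = (if c \<noteq> c' \<and> j = k then Lv k else Rv j)"

definition H_verts :: "nat \<Rightarrow> nat \<Rightarrow> nat \<Rightarrow> hv set" where
  "H_verts k c c' = {Vi, Vi', Wv, Wv'} \<union> Lv ` {1..k} \<union> rv k c c' ` {1..k}"

definition H_edges :: "nat \<Rightarrow> nat \<Rightarrow> nat \<Rightarrow> hv set set" where
  "H_edges k c c' =
     {{Lv a, Lv b} | a b. a \<in> {1..k} \<and> b \<in> {1..k} \<and> a \<noteq> b}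
   \<union> {{rv k c c' a, rv k c c' b} | a b. a \<in> {1..k} \<and> b \<in> {1..k} \<and> a \<noteq> b}
   \<union> {{Vi, Lv 1}}
   \<union> {{Wv, Lv j} | j. j \<in> {2..k-1}}
   \<union> {{Vi', rv k c c' 1}}
   \<union> {{Wv', rv k c c' j} | j. j \<in> {2..k-1}}
   \<union> (if c = c' then {{Lv k, Rv k}} else {})"

definition H_precol :: "nat \<Rightarrow> nat \<Rightarrow> hv \<rightharpoonup> nat" where
  "H_precol c c' = [Wv \<mapsto> c, Wv' \<mapsto> c']"

end

theory Submission
  imports Defs "HOL-Combinatorics.Transposition"
begin

text \<open>The vertex w forbids colour c on l_2, ..., l_{k-1}, so every legal colouring of the
  k-clique l_1, ..., l_k puts c on l_1 or on l_k; if also i has colour c, then l_k has colour c.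
  Symmetrically r_k has colour c' when i' has colour c'. The edge l_k r_k (for c = c') or the
  identification of l_k with r_k (for c \<noteq> c') makes both impossible at once.
  Conversely, if (b, b') \<noteq> (c, c') then at most one side is forced, the colours of l_k and
  r_k can be chosen to satisfy the junction, and each clique is coloured by a permutation
  of the colours with prescribed values at its two ends.\<close>

lemma bij_betw_prescribed_values:
  assumes "a \<in> A" "b \<in> A" "p \<in> A" "q \<in> A" "a \<noteq> b" "p \<noteq> q"
  obtains g where "bij_betw g A A" "g a = p" "g b = q"
proof
  let ?q = "transpose a p q"
  show "bij_betw (transpose a p \<circ> transpose b ?q) A A"
  proof (rule bij_betw_trans)
    show "bij_betw (transpose b ?q) A A" "bij_betw (transpose a p) A A"
      using assms by (auto simp: transpose_def)
  qed
  have "?q \<noteq> a" using assms by (auto simp: transpose_eq_iff)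
  then show "(transpose a p \<circ> transpose b ?q) a = p" using assms by simp
  show "(transpose a p \<circ> transpose b ?q) b = q" by simp
qed

lemma legal_colouring_clique_image:
  assumes "legal_colouring k V E \<chi>" "K \<subseteq> V" "finite K" "card K = k"
    and clique: "\<And>x y. x \<in> K \<Longrightarrow> y \<in> K \<Longrightarrow> x \<noteq> y \<Longrightarrow> {x, y} \<in> E"
  shows "\<chi> ` K = {1..k}"
proof (rule card_subset_eq)
  show "\<chi> ` K \<subseteq> {1..k}" using assms(1,2) by (auto simp: legal_colouring_def)
  have "inj_on \<chi> K"
    using assms(1) clique unfolding legal_colouring_def inj_on_def by metis
  then show "card (\<chi> ` K) = card {1..k}" using assms(4) by (simp add: card_image)
qed simp

lemma legal_colouring_end_of_clique_forced:
  assumes legal: "legal_colouring k V E \<chi>" and k: "k \<ge> 2"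
    and f: "inj_on f {1..k}" "f ` {1..k} \<subseteq> V"
    and clique: "\<And>a b. a \<in> {1..k} \<Longrightarrow> b \<in> {1..k} \<Longrightarrow> a \<noteq> b \<Longrightarrow> {f a, f b} \<in> E"
    and i: "{i, f 1} \<in> E" "i \<noteq> f 1" "\<chi> i = d"
    and w: "\<And>j. j \<in> {2..k-1} \<Longrightarrow> {w, f j} \<in> E \<and> w \<noteq> f j" "\<chi> w = d"
    and d: "d \<in> {1..k}"
  shows "\<chi> (f k) = d"
proof -
  have "\<chi> ` f ` {1..k} = {1..k}"
  proof (rule legal_colouring_clique_image[OF legal f(2)])
    show "card (f ` {1..k}) = k" using f(1) by (simp add: card_image)
    show "{x, y} \<in> E" if "x \<in> f ` {1..k}" "y \<in> f ` {1..k}" "x \<noteq> y" for x y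
      using that clique by blast
  qed simp
  then obtain j where j: "j \<in> {1..k}" "\<chi> (f j) = d" using d by (metis imageE image_image)
  have proper: "\<chi> x \<noteq> \<chi> y" if "{x, y} \<in> E" "x \<noteq> y" for x y
    using legal that by (auto simp: legal_colouring_def)
  have "j \<noteq> 1" using proper[OF i(1,2)] i(3) j by auto
  moreover have "j \<notin> {2..k-1}" using proper w j by force
  ultimately have "j = k" using j(1) by force
  with j(2) show ?thesis by simp
qed

lemma clique_colouring_with_ends:
  fixes k :: nat
  assumes k: "k \<ge> 3" and range: "b \<in> {1..k}" "c \<in> {1..k}" "q \<in> {1..k}"
    and forced: "b = c \<Longrightarrow> q = c"
  obtains g where "bij_betw g {1..k} {1..k}" "g 1 \<noteq> b" "g k = q" "\<forall>j\<in>{2..k-1}. g j \<noteq> c"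
proof -
  obtain p where p: "p \<in> {1..k}" "p \<noteq> q" "p \<noteq> b" "c \<in> {p, q}"
  proof (cases "q = c")
    case True
    have "card {b, c} < card {1..k}" using k by (simp add: card_insert_if)
    then have "\<not> {1..k} \<subseteq> {b, c}" by (meson card_mono finite.emptyI finite_insert leD)
    then show thesis using True that by blast
  next
    case False
    then show thesis using that[of c] range forced by auto
  qed
  obtain g where g: "bij_betw g {1..k} {1..k}" "g 1 = p" "g k = q"
    using bij_betw_prescribed_values[of 1 "{1..k}" k p q] p range k by auto
  have "g j \<noteq> c" if "j \<in> {2..k-1}" for j
  proof -
    have "g j \<noteq> g 1" "g j \<noteq> g k"
      using that k bij_betw_imp_inj_on[OF g(1)] by (auto simp: inj_on_eq_iff)
    then show ?thesis using p(4) g(2,3) by auto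
  qed
  with that g p show thesis by auto
qed

lemma junction_colours_exist:
  fixes k :: nat
  assumes k: "k \<ge> 2" and range: "c \<in> {1..k}" "c' \<in> {1..k}" and ne: "(b, b') \<noteq> (c, c')"
  obtains q q' where "q \<in> {1..k}" "q' \<in> {1..k}" "b = c \<Longrightarrow> q = c" "b' = c' \<Longrightarrow> q' = c'"
    "q = q' \<longleftrightarrow> c \<noteq> c'"
proof -
  obtain d where d: "d \<in> {1..k}" "d \<noteq> c"
    using k by (cases "c = 1") (auto intro: that[of 1] that[of 2])
  show thesis
  proof (cases "c = c'")
    case True
    then show thesis
      using that[of c d] that[of d c] d range ne by (cases "b = c") auto
  next
    case False
    then show thesis
      using that[of c c] that[of c' c'] range ne by (cases "b = c") auto
  qed
qed

lemma H_legal_colouring: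
  assumes range: "b \<in> {1..k}" "b' \<in> {1..k}" "c \<in> {1..k}" "c' \<in> {1..k}"
    and gL: "bij_betw gL {1..k} {1..k}" "gL 1 \<noteq> b" "\<forall>j\<in>{2..k-1}. gL j \<noteq> c"
    and gR: "bij_betw gR {1..k} {1..k}" "gR 1 \<noteq> b'" "\<forall>j\<in>{2..k-1}. gR j \<noteq> c'"
    and junction: "gL k = gR k \<longleftrightarrow> c \<noteq> c'"
  shows "legal_colouring k (H_verts k c c') (H_edges k c c') (case_hv b b' gL gR c c')"
proof -
  let ?\<chi> = "case_hv b b' gL gR c c'"
  have \<chi>_rv: "?\<chi> (rv k c c' j) = gR j" for j
    using junction by (simp add: rv_def)
  have "?\<chi> v \<in> {1..k}" if "v \<in> H_verts k c c'" for v
    using that range gL(1) gR(1) \<chi>_rv by (auto simp: H_verts_def bij_betw_def)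
  moreover have "?\<chi> x \<noteq> ?\<chi> y" if "{x, y} \<in> H_edges k c c'" for x y
  proof -
    from that consider
        (left_clique) a a' where "{x, y} = {Lv a, Lv a'}" "a \<in> {1..k}" "a' \<in> {1..k}" "a \<noteq> a'"
      | (right_clique) a a' where "{x, y} = {rv k c c' a, rv k c c' a'}"
          "a \<in> {1..k}" "a' \<in> {1..k}" "a \<noteq> a'"
      | (i_edge) "{x, y} = {Vi, Lv 1}"
      | (w_edge) j where "{x, y} = {Wv, Lv j}" "j \<in> {2..k-1}"
      | (i'_edge) "{x, y} = {Vi', rv k c c' 1}"
      | (w'_edge) j where "{x, y} = {Wv', rv k c c' j}" "j \<in> {2..k-1}"
      | (junction_edge) "c = c'" "{x, y} = {Lv k, Rv k}"
      unfolding H_edges_def by (auto split: if_splits)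
    then show ?thesis
    proof cases
      case (left_clique a a')
      then show ?thesis using gL(1) by (auto simp: doubleton_eq_iff bij_betw_def inj_on_eq_iff)
    next
      case (right_clique a a')
      then show ?thesis using gR(1) by (auto simp: doubleton_eq_iff bij_betw_def inj_on_eq_iff \<chi>_rv)
    next
      case junction_edge
      then show ?thesis using junction by (auto simp: doubleton_eq_iff)
    qed (use gL gR in \<open>auto simp: doubleton_eq_iff \<chi>_rv\<close>)
  qed
  ultimately show ?thesis by (auto simp: legal_colouring_def)
qed

lemma H_colouring_exists:
  assumes k: "k \<ge> 3"
    and range: "b \<in> {1..k}" "b' \<in> {1..k}" "c \<in> {1..k}" "c' \<in> {1..k}"
    and ne: "(b, b') \<noteq> (c, c')"
  obtains \<chi> where "legal_colouring k (H_verts k c c') (H_edges k c c') \<chi>"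
    "extends_precol (H_precol c c') \<chi>" "\<chi> Vi = b" "\<chi> Vi' = b'"
proof -
  obtain q q' where q: "q \<in> {1..k}" "q' \<in> {1..k}" "b = c \<Longrightarrow> q = c" "b' = c' \<Longrightarrow> q' = c'"
    and junction: "q = q' \<longleftrightarrow> c \<noteq> c'"
    using junction_colours_exist[of k c c' b b'] k range ne by auto
  obtain gL where gL: "bij_betw gL {1..k} {1..k}" "gL 1 \<noteq> b" "gL k = q" "\<forall>j\<in>{2..k-1}. gL j \<noteq> c"
    using clique_colouring_with_ends[OF k range(1,3) q(1,3)] .
  obtain gR where gR: "bij_betw gR {1..k} {1..k}" "gR 1 \<noteq> b'" "gR k = q'" "\<forall>j\<in>{2..k-1}. gR j \<noteq> c'"
    using clique_colouring_with_ends[OF k range(2,4) q(2,4)] .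
  show thesis
  proof (rule that)
    \<comment> \<open>colours i, i', l_j, r_j, w, w' by b, b', gL j, gR j, c, c'\<close>
    show "legal_colouring k (H_verts k c c') (H_edges k c c') (case_hv b b' gL gR c c')"
      using H_legal_colouring[OF range gL(1,2,4) gR(1,2,4)] gL(3) gR(3) junction by simp
  qed (simp_all add: extends_precol_def H_precol_def)
qed

lemma rv_neq_Wv': "Wv' \<noteq> rv k c c' j"
  by (simp add: rv_def)

lemma H_no_colouring_with_c_c':
  assumes k: "k \<ge> 2" and range: "c \<in> {1..k}" "c' \<in> {1..k}"
    and legal: "legal_colouring k (H_verts k c c') (H_edges k c c') \<chi>"
    and ext: "extends_precol (H_precol c c') \<chi>"
  shows "(\<chi> Vi, \<chi> Vi') \<noteq> (c, c')"
proof
  assume i: "(\<chi> Vi, \<chi> Vi') = (c, c')"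
  have w: "\<chi> Wv = c" "\<chi> Wv' = c'"
    using ext by (auto simp: extends_precol_def H_precol_def)
  have left: "\<chi> (Lv k) = c"
  proof (rule legal_colouring_end_of_clique_forced[OF legal, where f = Lv])
    show "{Lv a, Lv b} \<in> H_edges k c c'" if "a \<in> {1..k}" "b \<in> {1..k}" "a \<noteq> b" for a b
      using that unfolding H_edges_def by blast
    show "{Wv, Lv j} \<in> H_edges k c c' \<and> Wv \<noteq> Lv j" if "j \<in> {2..k-1}" for j
      using that unfolding H_edges_def by blast
    show "{Vi, Lv 1} \<in> H_edges k c c'" unfolding H_edges_def by blast
    show "Lv ` {1..k} \<subseteq> H_verts k c c'" unfolding H_verts_def by blast
  qed (use k range i w in \<open>simp_all add: inj_on_def\<close>)
  have right: "\<chi> (rv k c c' k) = c'"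
  proof (rule legal_colouring_end_of_clique_forced[OF legal, where f = "rv k c c'"])
    show "{rv k c c' a, rv k c c' b} \<in> H_edges k c c'"
      if "a \<in> {1..k}" "b \<in> {1..k}" "a \<noteq> b" for a b
      using that unfolding H_edges_def by blast
    show "{Wv', rv k c c' j} \<in> H_edges k c c' \<and> Wv' \<noteq> rv k c c' j" if "j \<in> {2..k-1}" for j
      using that rv_neq_Wv' unfolding H_edges_def by blast
    show "{Vi', rv k c c' 1} \<in> H_edges k c c'" unfolding H_edges_def by blast
    show "rv k c c' ` {1..k} \<subseteq> H_verts k c c'" unfolding H_verts_def by blast
    show "inj_on (rv k c c') {1..k}" by (auto simp: inj_on_def rv_def)
  qed (use k range i w in \<open>simp_all add: rv_def\<close>)
  show False
  proof (cases "c = c'")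
    case True
    then have "{Lv k, Rv k} \<in> H_edges k c c'" by (simp add: H_edges_def)
    with legal have "\<chi> (Lv k) \<noteq> \<chi> (Rv k)" by (auto simp: legal_colouring_def)
    with left right True show False by (simp add: rv_def)
  next
    case False
    with left right show False by (simp add: rv_def)
  qed
qed

lemma edges_at_Wv: "{e \<in> H_edges k c c'. Wv \<in> e} = (\<lambda>j. {Wv, Lv j}) ` {2..k-1}"
  by (auto simp: H_edges_def rv_def doubleton_eq_iff split: if_splits)

lemma edges_at_Wv': "{e \<in> H_edges k c c'. Wv' \<in> e} = (\<lambda>j. {Wv', rv k c c' j}) ` {2..k-1}"
  by (auto simp: H_edges_def rv_def doubleton_eq_iff split: if_splits)

lemma degree_Wv: "degree (H_edges k c c') Wv = k - 2"
proof -
  have "inj_on (\<lambda>j. {Wv, Lv j}) {2..k-1}" by (auto simp: inj_on_def doubleton_eq_iff)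
  then show ?thesis unfolding degree_def edges_at_Wv by (simp add: card_image)
qed

lemma degree_Wv': "degree (H_edges k c c') Wv' = k - 2"
proof -
  have "inj_on (\<lambda>j. {Wv', rv k c c' j}) {2..k-1}" by (auto simp: inj_on_def doubleton_eq_iff rv_def)
  then show ?thesis unfolding degree_def edges_at_Wv' by (simp add: card_image)
qed

lemma finite_H_verts: "finite (H_verts k c c')"
  by (simp add: H_verts_def)

lemma card_H_verts_le: "card (H_verts k c c') \<le> 2 * k + 4"
proof -
  have "card (H_verts k c c') \<le> card {Vi, Vi', Wv, Wv'} + card (Lv ` {1..k}) + card (rv k c c' ` {1..k})"
    unfolding H_verts_def by (intro order.trans[OF card_Un_le] add_mono card_Un_le order.refl)
  also have "\<dots> \<le> 4 + k + k"
    using card_image_le[of "{1..k}" Lv] card_image_le[of "{1..k}" "rv k c c'"] by simp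
  finally show ?thesis by simp
qed

lemma card_dom_H_precol: "card (dom (H_precol c c')) = 2"
  by (simp add: H_precol_def)

theorem claim3p2:
  shows "(\<exists>C::nat. \<forall>k c c'. k \<ge> 3 \<longrightarrow> c \<in> {1..k} \<longrightarrow> c' \<in> {1..k} \<longrightarrow>
            finite (H_verts k c c') \<and> card (H_verts k c c') \<le> C * k
          \<and> card (dom (H_precol c c')) = 2
          \<and> (\<forall>v\<in>dom (H_precol c c'). degree (H_edges k c c') v \<le> C * k))
     \<and> (\<forall>k c c'. k \<ge> 3 \<longrightarrow> c \<in> {1..k} \<longrightarrow> c' \<in> {1..k} \<longrightarrow>
            (\<forall>b b'. b \<in> {1..k} \<longrightarrow> b' \<in> {1..k} \<longrightarrow> (b, b') \<noteq> (c, c') \<longrightarrow>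
               (\<exists>\<chi>. legal_colouring k (H_verts k c c') (H_edges k c c') \<chi>
                   \<and> extends_precol (H_precol c c') \<chi> \<and> \<chi> Vi = b \<and> \<chi> Vi' = b'))
          \<and> \<not> (\<exists>\<chi>. legal_colouring k (H_verts k c c') (H_edges k c c') \<chi>
                   \<and> extends_precol (H_precol c c') \<chi> \<and> \<chi> Vi = c \<and> \<chi> Vi' = c'))"
proof -
  have size: "finite (H_verts k c c') \<and> card (H_verts k c c') \<le> 4 * k
      \<and> card (dom (H_precol c c')) = 2
      \<and> (\<forall>v\<in>dom (H_precol c c'). degree (H_edges k c c') v \<le> 4 * k)" if "k \<ge> 3" for k c c'
    using that finite_H_verts card_H_verts_le[of k c c'] card_dom_H_precol[of c c']
    by (auto simp: H_precol_def degree_Wv degree_Wv')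
  have colourable: "\<exists>\<chi>. legal_colouring k (H_verts k c c') (H_edges k c c') \<chi>
      \<and> extends_precol (H_precol c c') \<chi> \<and> \<chi> Vi = b \<and> \<chi> Vi' = b'"
    if "k \<ge> 3" "b \<in> {1..k}" "b' \<in> {1..k}" "c \<in> {1..k}" "c' \<in> {1..k}" "(b, b') \<noteq> (c, c')"
    for k c c' b b'
    by (rule H_colouring_exists[OF that]) blast
  have uncolourable: "\<not> (\<exists>\<chi>. legal_colouring k (H_verts k c c') (H_edges k c c') \<chi>
      \<and> extends_precol (H_precol c c') \<chi> \<and> \<chi> Vi = c \<and> \<chi> Vi' = c')"
    if "k \<ge> 3" "c \<in> {1..k}" "c' \<in> {1..k}" for k c c'
    using H_no_colouring_with_c_c'[of k c c'] that by fastforce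
  show ?thesis
    using size colourable uncolourable by blast
qed

end
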